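(* There exists a decreasing sequence of elements of $\mathcal{D}_0$ with limit $\sqrt3$.
   Context: For an infinite word $w$ (over any alphabet) with infinitely many palindromic prefixes (the empty word counting as one), let $(n_i)_{i\ge1}$ be the increasing sequence of their lengths and $\delta(w)=\limsup n_{i+1}/n_i$. $w$ has abundant palindromic prefixes if it has infinitely many palindromic prefixes and $n_{i+1}\le2n_i+1$ for all $i\ge1$. $\mathcal{D}_0$ is the set of values $\delta(w)$ over all words $w$ with abundant palindromic prefixes. *)

theory Defs
  imports "HOL-Analysis.Analysis" "HOL-Library.Infinite_Set"
begin

definition pal_prefix :: "(nat \<Rightarrow> 'a) \<Rightarrow> nat \<Rightarrow> bool" where
  "pal_prefix w n \<longleftrightarrow> (\<forall>i<n. w i = w (n - 1 - i))"

definition pal_lengths :: "(nat \<Rightarrow> 'a) \<Rightarrow> nat set" where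
  "pal_lengths w = {n. pal_prefix w n}"

text \<open>Increasing enumeration (n_i): the paper's n_(i+1) is plen w i (0-based).\<close>
definition plen :: "(nat \<Rightarrow> 'a) \<Rightarrow> nat \<Rightarrow> nat" where
  "plen w i = enumerate (pal_lengths w) i"

definition delta :: "(nat \<Rightarrow> 'a) \<Rightarrow> ereal" where
  "delta w = limsup (\<lambda>i. ereal (real (plen w (Suc i)) / real (plen w i)))"

definition abundant :: "(nat \<Rightarrow> 'a) \<Rightarrow> bool" where
  "abundant w \<longleftrightarrow> infinite (pal_lengths w) \<and>
     (\<forall>i. plen w (Suc i) \<le> 2 * plen w i + 1)"

text \<open>Alphabet: nat (every word over any alphabet has countably many letters and
  can be injectively relabelled over nat without changing its palindromic prefixes).\<close>
definition D0 :: "ereal set" where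
  "D0 = {delta w | w :: nat \<Rightarrow> nat. abundant w}"

end

theory Submission
  imports Defs
begin

text \<open>A word with abundant palindromic prefixes is built from a delay sequence \<open>\<delta>\<close>:
  its palindromic prefix lengths obey \<open>n\<^sub>i\<^sub>+\<^sub>1 = 2 n\<^sub>i - n\<^sub>i\<^sub>-\<^sub>\<delta>\<^sub>i\<close>, or
  \<open>n\<^sub>i\<^sub>+\<^sub>1 = 2 n\<^sub>i + 1\<close> around a fresh letter, and a weak Fine--Wilf argument shows
  that under a divisibility condition on these lengths no other prefix is a palindrome.
  For delays repeating \<open>2\<^sup>k (1 3 2)\<^sup>m 1 3 3\<close>, the quantity
  \<open>n\<^sub>i - n\<^sub>i\<^sub>-\<^sub>1 - n\<^sub>i\<^sub>-\<^sub>2\<close> is invariant along each cycle \<open>1 3 2\<close>, while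
  \<open>(1 - sqrt 3) n\<^sub>i + sqrt 3 n\<^sub>i\<^sub>-\<^sub>1 - n\<^sub>i\<^sub>-\<^sub>2\<close> is multiplied by \<open>2 - sqrt 3\<close>.
  The long runs of delay \<open>2\<close> make the invariant negligible against the gaps
  \<open>n\<^sub>i\<^sub>+\<^sub>1 - n\<^sub>i\<close>, so all ratios \<open>n\<^sub>i\<^sub>+\<^sub>1 / n\<^sub>i\<close> are eventually below
  \<open>sqrt 3 + 2\<^sup>-\<^sup>m\<close> (for \<open>k = 2 m + 10\<close>), whereas at the closing delay \<open>3\<close> the
  ratio exceeds \<open>sqrt 3\<close> by a fixed positive amount. Thus \<open>\<D>\<^sub>0\<close> has
  elements in \<open>(sqrt 3, sqrt 3 + 2\<^sup>-\<^sup>m]\<close> for every \<open>m\<close>.\<close>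

section \<open>Periods of palindromic prefixes\<close>

definition has_period :: "(nat \<Rightarrow> 'a) \<Rightarrow> nat \<Rightarrow> nat \<Rightarrow> bool" where
  "has_period w p L \<longleftrightarrow> (\<forall>t. p \<le> t \<and> t < L \<longrightarrow> w t = w (t - p))"

lemma pal_prefixD: "pal_prefix w n \<Longrightarrow> i < n \<Longrightarrow> w i = w (n - 1 - i)"
  unfolding pal_prefix_def by blast

lemma has_periodD: "has_period w p L \<Longrightarrow> p \<le> t \<Longrightarrow> t < L \<Longrightarrow> w t = w (t - p)"
  unfolding has_period_def by blast

lemma has_period_mono: "has_period w p L \<Longrightarrow> L' \<le> L \<Longrightarrow> has_period w p L'"
  unfolding has_period_def by (meson less_le_trans)

lemma pal_prefix_extend:
  assumes per: "has_period w p N" and pal: "pal_prefix w (N - p)" and short: "2 * p \<le> N + 1"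
  shows "pal_prefix w N"
  unfolding pal_prefix_def
proof (intro allI impI)
  fix t assume t: "t < N"
  consider (right) "p \<le> N - 1 - t" | (left) "p \<le> t" | (centre) "t = N - 1 - t"
    using short t by linarith
  then show "w t = w (N - 1 - t)"
  proof cases
    case right
    have "N - 1 - t - p < N - p"
      using right t by linarith
    have "w (N - 1 - t) = w (N - 1 - t - p)"
      using has_periodD[OF per right] t by simp
    also have "\<dots> = w (N - p - 1 - (N - 1 - t - p))"
      using pal_prefixD[OF pal \<open>N - 1 - t - p < N - p\<close>] .
    also have "N - p - 1 - (N - 1 - t - p) = t"
      using right t by linarith
    finally show ?thesis by simp
  next
    case left
    have "t - p < N - p"
      using left t by linarith
    have "w t = w (t - p)"
      using has_periodD[OF per left t] .
    also have "\<dots> = w (N - p - 1 - (t - p))"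
      using pal_prefixD[OF pal \<open>t - p < N - p\<close>] .
    also have "N - p - 1 - (t - p) = N - 1 - t"
      using left t by linarith
    finally show ?thesis .
  qed simp
qed

lemma pal_prefix_shorten:
  assumes pal: "pal_prefix w N" and per: "has_period w g N" and "g \<le> N"
  shows "pal_prefix w (N - g)"
  unfolding pal_prefix_def
proof (intro allI impI)
  fix t assume t: "t < N - g"
  have "w (t + g) = w t"
    using has_periodD[OF per, of "t + g"] t by simp
  moreover have "w (N - g - 1 - t) = w (N - 1 - (N - g - 1 - t))"
    using pal_prefixD[OF pal, of "N - g - 1 - t"] t by simp
  moreover have "N - 1 - (N - g - 1 - t) = t + g"
    using t by linarith
  ultimately show "w t = w (N - g - 1 - t)" by simp
qed

lemma has_period_diff:
  assumes P: "has_period w p L" and Q: "has_period w q L" and "p + q \<le> L" "q < p"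
  shows "has_period w (p - q) L"
  unfolding has_period_def
proof (intro allI impI)
  fix t assume t: "p - q \<le> t \<and> t < L"
  show "w t = w (t - (p - q))"
  proof (cases "t + q < L")
    case True
    have "w t = w (t + q)"
      using has_periodD[OF Q, of "t + q"] True by simp
    also have "\<dots> = w (t + q - p)"
      using has_periodD[OF P, of "t + q"] True t by linarith
    also have "t + q - p = t - (p - q)"
      using t assms(4) by linarith
    finally show ?thesis .
  next
    case False
    then have "p \<le> t" using assms(3) by linarith
    have "t - p + q < L" using t assms(4) \<open>p \<le> t\<close> by linarith
    have "w t = w (t - p)"
      using has_periodD[OF P \<open>p \<le> t\<close>] t by blast
    also have "\<dots> = w (t - p + q)"
      using has_periodD[OF Q le_add2 \<open>t - p + q < L\<close>] by simp
    also have "t - p + q = t - (p - q)"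
      using \<open>p \<le> t\<close> assms(4) by linarith
    finally show ?thesis .
  qed
qed

lemma has_period_gcd:
  assumes "has_period w p L" "has_period w q L" "p + q \<le> L"
  shows "has_period w (gcd p q) L"
  using assms
proof (induction "p + q" arbitrary: p q rule: less_induct)
  case less
  consider "p = 0 \<or> q = 0 \<or> p = q" | "0 < q" "q < p" | "0 < p" "p < q"
    by linarith
  then show ?case
  proof cases
    case 1
    then show ?thesis using less.prems by auto
  next
    case 2
    have "has_period w (p - q) L"
      using has_period_diff[OF less.prems 2(2)] .
    then have "has_period w (gcd (p - q) q) L"
      using less.hyps[of "p - q" q] less.prems(2,3) 2 by simp
    then show ?thesis
      using 2 gcd_diff1_nat[of q p] by (simp add: gcd.commute)
  next
    case 3
    have "has_period w (q - p) L"
      using has_period_diff[OF less.prems(2,1) _ 3(2)] less.prems(3) by simp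
    then have "has_period w (gcd p (q - p)) L"
      using less.hyps[of p "q - p"] less.prems(1,3) 3 by simp
    then show ?thesis
      using 3 gcd_diff1_nat[of p q] by (simp add: gcd.commute)
  qed
qed

lemma has_period_pal_prefixes:
  assumes "pal_prefix w m" "pal_prefix w P" "P \<le> m"
  shows "has_period w (m - P) m"
  unfolding has_period_def
proof (intro allI impI)
  fix t assume t: "m - P \<le> t \<and> t < m"
  have "m - 1 - t < P"
    using t assms(3) by linarith
  have "w t = w (m - 1 - t)"
    using pal_prefixD[OF assms(1)] t by blast
  also have "\<dots> = w (P - 1 - (m - 1 - t))"
    using pal_prefixD[OF assms(2) \<open>m - 1 - t < P\<close>] .
  also have "P - 1 - (m - 1 - t) = t - (m - P)"
    using t assms(3) by linarith
  finally show "w t = w (t - (m - P))" .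
qed

lemma pal_prefix_gcd_shorter:
  assumes "pal_prefix w m" "pal_prefix w N" "N < m" "has_period w p m" "0 < p" "p \<le> N"
  shows "pal_prefix w (N - gcd p (m - N))"
proof -
  have "has_period w (m - N) m"
    using has_period_pal_prefixes[OF assms(1,2) less_imp_le[OF assms(3)]] .
  then have "has_period w (gcd p (m - N)) m"
    using has_period_gcd[OF assms(4)] assms(3,6) by simp
  then have "has_period w (gcd p (m - N)) N"
    using has_period_mono[OF _ less_imp_le[OF assms(3)]] by blast
  moreover have "gcd p (m - N) \<le> N"
    using assms(5,6) gcd_le1_nat[of p "m - N"] by linarith
  ultimately show ?thesis
    using pal_prefix_shorten assms(2) by blast
qed

section \<open>Words with prescribed palindromic prefixes\<close>

text \<open>The palindromic prefixes \<open>w\<^sub>0, w\<^sub>1, \<dots>\<close> of the word are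
  built from a delay sequence \<open>\<delta>\<close>: \<open>w\<^sub>i\<^sub>+\<^sub>1 = w\<^sub>i w\<^sub>i\<^sub>-\<^sub>\<delta>\<^sub>i\<^sup>-\<^sup>1 w\<^sub>i\<close> when
  \<open>0 < \<delta> i \<le> i\<close>, and \<open>w\<^sub>i\<^sub>+\<^sub>1 = w\<^sub>i a w\<^sub>i\<close> with a fresh letter \<open>a\<close> otherwise.\<close>

definition fresh_step :: "(nat \<Rightarrow> nat) \<Rightarrow> nat \<Rightarrow> bool" where
  "fresh_step \<delta> i \<longleftrightarrow> \<delta> i = 0 \<or> i < \<delta> i"

fun pref_len :: "(nat \<Rightarrow> nat) \<Rightarrow> nat \<Rightarrow> nat" where
  "pref_len \<delta> 0 = 0"
| "pref_len \<delta> (Suc i) =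
     (if fresh_step \<delta> i then 2 * pref_len \<delta> i + 1
      else 2 * pref_len \<delta> i - pref_len \<delta> (i - \<delta> i))"

declare pref_len.simps(2) [simp del]

lemma pref_len_less: "j < i \<Longrightarrow> pref_len \<delta> j < pref_len \<delta> i"
proof (induction i arbitrary: j rule: less_induct)
  case (less i)
  then obtain i' where i: "i = Suc i'"
    by (cases i) auto
  have "pref_len \<delta> i' < pref_len \<delta> (Suc i')"
  proof (cases "fresh_step \<delta> i'")
    case False
    then have "i' - \<delta> i' < i'"
      unfolding fresh_step_def by auto
    then have "pref_len \<delta> (i' - \<delta> i') < pref_len \<delta> i'"
      using less.IH i by blast
    with False show ?thesis
      by (simp add: pref_len.simps(2))
  qed (simp add: pref_len.simps(2))
  moreover have "pref_len \<delta> j \<le> pref_len \<delta> i'"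
    using less.IH[of i' j] less.prems i by (cases "j = i'") auto
  ultimately show ?case
    using i by simp
qed

lemma strict_mono_pref_len: "strict_mono (pref_len \<delta>)"
  by (simp add: strict_monoI pref_len_less)

lemma pref_len_less_iff [simp]: "pref_len \<delta> i < pref_len \<delta> j \<longleftrightarrow> i < j"
  using strict_mono_pref_len strict_mono_less by blast

lemma pref_len_le_iff [simp]: "pref_len \<delta> i \<le> pref_len \<delta> j \<longleftrightarrow> i \<le> j"
  using strict_mono_pref_len strict_mono_less_eq by blast

lemma pref_len_pos: "0 < i \<Longrightarrow> 0 < pref_len \<delta> i"
  using pref_len_less[of 0 i \<delta>] by simp

lemma infinite_range_pref_len: "infinite (range (pref_len \<delta>))"
  using range_inj_infinite strict_mono_imp_inj_on strict_mono_pref_len by blast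

definition pref_period :: "(nat \<Rightarrow> nat) \<Rightarrow> nat \<Rightarrow> nat" where
  "pref_period \<delta> i = pref_len \<delta> (Suc i) - pref_len \<delta> i"

lemma pref_period_pos: "0 < pref_period \<delta> i"
  by (simp add: pref_period_def)

lemma pref_period_fresh: "fresh_step \<delta> i \<Longrightarrow> pref_period \<delta> i = pref_len \<delta> i + 1"
  by (simp add: pref_period_def pref_len.simps(2))

lemma pref_period_nonfresh:
  "\<not> fresh_step \<delta> i \<Longrightarrow> pref_period \<delta> i = pref_len \<delta> i - pref_len \<delta> (i - \<delta> i)"
  by (simp add: pref_period_def pref_len.simps(2))

lemma pref_period_le_half: "2 * pref_period \<delta> i \<le> pref_len \<delta> (Suc i) + 1"
  by (cases "fresh_step \<delta> i") (simp_all add: pref_period_def pref_len.simps(2))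

definition block_index :: "(nat \<Rightarrow> nat) \<Rightarrow> nat \<Rightarrow> nat" where
  "block_index \<delta> p = (LEAST i. p < pref_len \<delta> (Suc i))"

lemma block_index_eqI:
  assumes "pref_len \<delta> i \<le> p" "p < pref_len \<delta> (Suc i)"
  shows "block_index \<delta> p = i"
  unfolding block_index_def
proof (rule Least_equality)
  fix j assume "p < pref_len \<delta> (Suc j)"
  then have "pref_len \<delta> i < pref_len \<delta> (Suc j)"
    using assms(1) by linarith
  then show "i \<le> j" by simp
qed (use assms in simp)

lemma block_index_bounds:
  "pref_len \<delta> (block_index \<delta> p) \<le> p \<and> p < pref_len \<delta> (Suc (block_index \<delta> p))"
proof -
  have "Suc p \<le> pref_len \<delta> (Suc p)"
    using strict_mono_imp_increasing strict_mono_pref_len by blast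
  then have ex: "\<exists>i. p < pref_len \<delta> (Suc i)"
    by (metis Suc_le_eq)
  have upper: "p < pref_len \<delta> (Suc (block_index \<delta> p))"
    unfolding block_index_def by (rule LeastI_ex[OF ex])
  have "pref_len \<delta> (block_index \<delta> p) \<le> p"
  proof (cases "block_index \<delta> p")
    case (Suc j)
    then have "\<not> p < pref_len \<delta> (Suc j)"
      unfolding block_index_def by (metis lessI not_less_Least)
    then show ?thesis using Suc by simp
  qed simp
  with upper show ?thesis by blast
qed

text \<open>Letters are positions: the prefix of length \<open>pref_len \<delta> (Suc i)\<close> has period
  \<open>pref_period \<delta> i\<close>, and the only positions not determined by these periods are
  the centres of the fresh steps, which receive their own (new) position as letter.\<close>

function word_of :: "(nat \<Rightarrow> nat) \<Rightarrow> nat \<Rightarrow> nat" where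
  "word_of \<delta> p =
     (if p < pref_period \<delta> (block_index \<delta> p) then p
      else word_of \<delta> (p - pref_period \<delta> (block_index \<delta> p)))"
  by auto
termination
proof (relation "Wellfounded.measure snd")
  fix \<delta> p
  show "((\<delta>, p - pref_period \<delta> (block_index \<delta> p)), \<delta>, p) \<in> Wellfounded.measure snd"
    if "\<not> p < pref_period \<delta> (block_index \<delta> p)"
    using that pref_period_pos[of \<delta> "block_index \<delta> p"] by simp
qed simp

declare word_of.simps [simp del]

lemma word_of_le: "word_of \<delta> p \<le> p"
proof (induction p rule: less_induct)
  case (less p)
  let ?p = "pref_period \<delta> (block_index \<delta> p)"
  show ?case
  proof (cases "p < ?p")
    case False
    then have "p - ?p < p"
      using pref_period_pos[of \<delta> "block_index \<delta> p"] by linarith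
    then have "word_of \<delta> (p - ?p) \<le> p"
      using less.IH[of "p - ?p"] by simp
    with False show ?thesis
      by (subst word_of.simps) simp
  qed (subst word_of.simps, simp)
qed

lemma word_of_shift:
  assumes "pref_len \<delta> i \<le> p" "p < pref_len \<delta> (Suc i)" "pref_period \<delta> i \<le> p"
  shows "word_of \<delta> p = word_of \<delta> (p - pref_period \<delta> i)"
  using assms block_index_eqI[OF assms(1,2)] by (subst word_of.simps) simp

lemma word_of_fresh_centre:
  "fresh_step \<delta> i \<Longrightarrow> word_of \<delta> (pref_len \<delta> i) = pref_len \<delta> i"
  using block_index_eqI[of \<delta> i "pref_len \<delta> i"] pref_period_fresh[of \<delta> i]
  by (subst word_of.simps) simp

lemma has_period_word_of_step:
  assumes "\<not> fresh_step \<delta> i \<Longrightarrow>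
      pal_prefix (word_of \<delta>) (pref_len \<delta> i) \<and> pal_prefix (word_of \<delta>) (pref_len \<delta> (i - \<delta> i))"
  shows "has_period (word_of \<delta>) (pref_period \<delta> i) (pref_len \<delta> (Suc i))"
  unfolding has_period_def
proof (intro allI impI)
  fix t assume t: "pref_period \<delta> i \<le> t \<and> t < pref_len \<delta> (Suc i)"
  show "word_of \<delta> t = word_of \<delta> (t - pref_period \<delta> i)"
  proof (cases "pref_len \<delta> i \<le> t")
    case True
    then show ?thesis using word_of_shift t by blast
  next
    case False
    then have "\<not> fresh_step \<delta> i"
      using t pref_period_fresh[of \<delta> i] by auto
    then have "has_period (word_of \<delta>) (pref_period \<delta> i) (pref_len \<delta> i)"
      using has_period_pal_prefixes[of "word_of \<delta>" "pref_len \<delta> i" "pref_len \<delta> (i - \<delta> i)"]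
        assms pref_period_nonfresh by simp
    then show ?thesis
      by (rule has_periodD) (use False t in auto)
  qed
qed

lemma pal_prefix_word_of: "pal_prefix (word_of \<delta>) (pref_len \<delta> i)"
proof (induction i rule: less_induct)
  case (less i)
  show ?case
  proof (cases i)
    case 0
    then show ?thesis by (simp add: pal_prefix_def)
  next
    case (Suc j)
    have "\<not> fresh_step \<delta> j \<Longrightarrow> j - \<delta> j < i"
      using Suc by simp
    then have "has_period (word_of \<delta>) (pref_period \<delta> j) (pref_len \<delta> i)"
      using has_period_word_of_step[of \<delta> j] less.IH Suc by simp
    moreover have "pref_len \<delta> i - pref_period \<delta> j = pref_len \<delta> j"
      using Suc by (simp add: pref_period_def less_imp_le)
    ultimately show ?thesis
      using pal_prefix_extend[of "word_of \<delta>" "pref_period \<delta> j" "pref_len \<delta> i"]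
        less.IH[of j] pref_period_le_half[of \<delta> j] Suc by simp
  qed
qed

lemma has_period_word_of:
  "has_period (word_of \<delta>) (pref_period \<delta> i) (pref_len \<delta> (Suc i))"
  using has_period_word_of_step pal_prefix_word_of by blast

text \<open>A palindromic prefix strictly between \<open>pref_len \<delta> i\<close> and \<open>pref_len \<delta> (Suc i)\<close>
  would, by Fine--Wilf, produce one of length \<open>pref_len \<delta> j\<close> with
  \<open>i - \<delta> i < j < i\<close> at a distance from \<open>pref_len \<delta> i\<close> dividing the period;
  admissibility excludes this.\<close>

definition admissible :: "(nat \<Rightarrow> nat) \<Rightarrow> nat \<Rightarrow> bool" where
  "admissible \<delta> i \<longleftrightarrow> fresh_step \<delta> i \<or>
     (\<forall>j. i - \<delta> i < j \<and> j < i \<longrightarrow>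
        \<not> (pref_len \<delta> i - pref_len \<delta> j) dvd (pref_len \<delta> i - pref_len \<delta> (i - \<delta> i)))"

lemma not_pal_prefix_after_fresh:
  assumes "fresh_step \<delta> i" "pref_len \<delta> i < m" "m < pref_len \<delta> (Suc i)"
  shows "\<not> pal_prefix (word_of \<delta>) m"
proof
  assume "pal_prefix (word_of \<delta>) m"
  then have "word_of \<delta> (pref_len \<delta> i) = word_of \<delta> (m - 1 - pref_len \<delta> i)"
    using pal_prefixD assms(2) by blast
  moreover have "m - 1 - pref_len \<delta> i < pref_len \<delta> i"
    using assms by (simp add: pref_len.simps(2))
  ultimately show False
    using word_of_fresh_centre[OF assms(1)] word_of_le[of \<delta> "m - 1 - pref_len \<delta> i"] by simp
qed

lemma pal_prefix_word_of_imp_pref_len: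
  assumes adm: "\<And>i. admissible \<delta> i" and pal: "pal_prefix (word_of \<delta>) m"
  shows "m \<in> range (pref_len \<delta>)"
  using pal
proof (induction m rule: less_induct)
  case (less m)
  define i where "i = block_index \<delta> m"
  have lo: "pref_len \<delta> i \<le> m" and hi: "m < pref_len \<delta> (Suc i)"
    using block_index_bounds unfolding i_def by blast+
  show ?case
  proof (cases "m = pref_len \<delta> i")
    case False
    with lo have gt: "pref_len \<delta> i < m" by simp
    then have nonfresh: "\<not> fresh_step \<delta> i"
      using not_pal_prefix_after_fresh hi less.prems by blast
    let ?j = "i - \<delta> i" and ?p = "pref_period \<delta> i"
    let ?g = "gcd ?p (m - pref_len \<delta> i)"
    have p: "?p = pref_len \<delta> i - pref_len \<delta> ?j"
      using pref_period_nonfresh[OF nonfresh] .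
    have "has_period (word_of \<delta>) ?p m"
      using has_period_word_of has_period_mono hi by (meson less_imp_le)
    moreover have "0 < ?p"
      by (rule pref_period_pos)
    moreover have "?p \<le> pref_len \<delta> i"
      using p by simp
    ultimately have pal_g: "pal_prefix (word_of \<delta>) (pref_len \<delta> i - ?g)"
      using pal_prefix_gcd_shorter[OF less.prems pal_prefix_word_of gt] by blast
    have "0 < ?g" "?g \<le> m - pref_len \<delta> i"
      using gt by simp_all
    moreover have "m - pref_len \<delta> i < ?p"
      using hi gt unfolding pref_period_def by linarith
    ultimately obtain j where j: "pref_len \<delta> i - ?g = pref_len \<delta> j"
      using less.IH[OF _ pal_g] gt by fastforce
    have "pref_len \<delta> ?j < pref_len \<delta> j" "pref_len \<delta> j < pref_len \<delta> i"
      and dist: "pref_len \<delta> i - pref_len \<delta> j = ?g"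
      using j p \<open>0 < ?g\<close> \<open>?g \<le> m - pref_len \<delta> i\<close> \<open>m - pref_len \<delta> i < ?p\<close>
      by linarith+
    then have "?j < j" "j < i"
      by simp_all
    with dist show ?thesis
      using adm[of i] nonfresh p unfolding admissible_def by auto
  qed simp
qed

lemma pal_lengths_word_of:
  "(\<And>i. admissible \<delta> i) \<Longrightarrow> pal_lengths (word_of \<delta>) = range (pref_len \<delta>)"
  using pal_prefix_word_of_imp_pref_len pal_prefix_word_of unfolding pal_lengths_def by blast

lemma enumerate_range_strict_mono:
  fixes f :: "nat \<Rightarrow> nat"
  assumes "strict_mono f"
  shows "enumerate (range f) = f"
proof
  have inf: "infinite (range f)"
    using range_inj_infinite strict_mono_imp_inj_on assms by blast
  fix n show "enumerate (range f) n = f n"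
  proof (induction n)
    case 0
    show ?case
      unfolding enumerate_0 using assms
      by (auto intro!: Least_equality simp: strict_mono_less_eq)
  next
    case (Suc n)
    show ?case
      unfolding enumerate_Suc''[OF inf] Suc using assms
      by (auto intro!: Least_equality simp: strict_mono_less strict_mono_less_eq Suc_le_eq)
  qed
qed

lemma plen_word_of: "(\<And>i. admissible \<delta> i) \<Longrightarrow> plen (word_of \<delta>) = pref_len \<delta>"
  unfolding plen_def[abs_def]
  by (simp add: pal_lengths_word_of enumerate_range_strict_mono strict_mono_pref_len)

lemma abundant_word_of: "(\<And>i. admissible \<delta> i) \<Longrightarrow> abundant (word_of \<delta>)"
  using infinite_range_pref_len
  by (auto simp: abundant_def plen_word_of pal_lengths_word_of pref_len.simps(2))

lemma delta_word_of:
  "(\<And>i. admissible \<delta> i) \<Longrightarrow>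
     delta (word_of \<delta>) = limsup (\<lambda>i. ereal (real (pref_len \<delta> (Suc i)) / real (pref_len \<delta> i)))"
  unfolding delta_def by (simp add: plen_word_of)

lemma pref_period_less_Suc:
  assumes "fresh_step \<delta> (Suc u) \<or> 2 \<le> \<delta> (Suc u)"
  shows "pref_period \<delta> u < pref_period \<delta> (Suc u)"
proof (cases "fresh_step \<delta> (Suc u)")
  case True
  then show ?thesis
    using pref_len.simps(2)[of \<delta> "Suc u"] unfolding pref_period_def by simp
next
  case False
  then have "2 \<le> \<delta> (Suc u)" "\<delta> (Suc u) \<le> Suc u"
    using assms unfolding fresh_step_def by auto
  then have "pref_len \<delta> (Suc u - \<delta> (Suc u)) < pref_len \<delta> u"
    by simp
  moreover have "pref_len \<delta> u < pref_len \<delta> (Suc u)"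
    by simp
  moreover have "pref_len \<delta> (Suc (Suc u)) =
      2 * pref_len \<delta> (Suc u) - pref_len \<delta> (Suc u - \<delta> (Suc u))"
    using False by (simp add: pref_len.simps(2)[of \<delta> "Suc u"])
  ultimately show ?thesis
    unfolding pref_period_def by linarith
qed

lemma pref_period_eq_Suc:
  "\<delta> (Suc u) = 1 \<Longrightarrow> pref_period \<delta> u = pref_period \<delta> (Suc u)"
  using pref_len.simps(2)[of \<delta> "Suc u"] pref_len_less_iff[of \<delta> u "Suc u"]
  unfolding pref_period_def fresh_step_def by simp

lemma mono_pref_period: "mono (pref_period \<delta>)"
  unfolding mono_iff_le_Suc
proof
  fix u
  show "pref_period \<delta> u \<le> pref_period \<delta> (Suc u)"
  proof (cases "\<delta> (Suc u) = 1")
    case False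
    then have "fresh_step \<delta> (Suc u) \<or> 2 \<le> \<delta> (Suc u)"
      unfolding fresh_step_def by linarith
    then show ?thesis
      using pref_period_less_Suc by (simp add: less_imp_le)
  qed (simp add: pref_period_eq_Suc)
qed

lemma not_dvd_between:
  fixes p q c :: nat
  assumes "c * q < p" "p < c * q + q"
  shows "\<not> q dvd p"
proof
  assume "q dvd p"
  then obtain x where x: "p = q * x" ..
  then have "c < x"
    using assms(1) by (simp add: mult.commute)
  moreover have "q * x < q * Suc c"
    using assms(2) x by (simp add: mult.commute)
  then have "x < Suc c"
    by (rule mult_left_less_imp_less) simp
  ultimately show False by simp
qed

lemma admissible_delay1: "\<delta> i = 1 \<Longrightarrow> admissible \<delta> i"
  unfolding admissible_def by auto

lemma admissible_delay2:
  assumes "\<delta> (Suc (Suc u)) = 2" "fresh_step \<delta> (Suc u) \<or> 2 \<le> \<delta> (Suc u)"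
  shows "admissible \<delta> (Suc (Suc u))"
  unfolding admissible_def
proof (intro disjI2 allI impI)
  let ?n = "pref_len \<delta>"
  fix j assume "Suc (Suc u) - \<delta> (Suc (Suc u)) < j \<and> j < Suc (Suc u)"
  then have j: "j = Suc u"
    using assms(1) by linarith
  have "pref_period \<delta> u < pref_period \<delta> (Suc u)"
    using pref_period_less_Suc[of \<delta> u] assms(2) by simp
  moreover have "?n u < ?n (Suc u)" "?n (Suc u) < ?n (Suc (Suc u))"
    by simp_all
  ultimately have "\<not> (?n (Suc (Suc u)) - ?n (Suc u)) dvd (?n (Suc (Suc u)) - ?n u)"
    unfolding pref_period_def by (intro not_dvd_between[where c = 1]) linarith+
  then show "\<not> (?n (Suc (Suc u)) - ?n j) dvd (?n (Suc (Suc u)) - ?n (Suc (Suc u) - \<delta> (Suc (Suc u))))"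
    using j assms(1) by simp
qed

lemma admissible_delay3_after1:
  assumes "\<delta> (Suc (Suc (Suc u))) = 3" "\<delta> (Suc (Suc u)) = 1" "2 \<le> \<delta> (Suc u)"
  shows "admissible \<delta> (Suc (Suc (Suc u)))"
  unfolding admissible_def
proof (intro disjI2 allI impI)
  let ?n = "pref_len \<delta>" and ?i = "Suc (Suc (Suc u))"
  fix j assume "?i - \<delta> ?i < j \<and> j < ?i"
  then have j: "j = Suc u \<or> j = Suc (Suc u)"
    using assms(1) by linarith
  have "pref_period \<delta> u < pref_period \<delta> (Suc u)"
    using pref_period_less_Suc[of \<delta> u] assms(3) by simp
  moreover have "pref_period \<delta> (Suc u) = pref_period \<delta> (Suc (Suc u))"
    using pref_period_eq_Suc[of \<delta> "Suc u"] assms(2) by simp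
  moreover have "?n u < ?n (Suc u)" "?n (Suc u) < ?n (Suc (Suc u))" "?n (Suc (Suc u)) < ?n ?i"
    by simp_all
  ultimately have gaps: "?n (Suc u) - ?n u < ?n (Suc (Suc u)) - ?n (Suc u)"
    "?n (Suc (Suc u)) - ?n (Suc u) = ?n ?i - ?n (Suc (Suc u))"
    "?n u < ?n (Suc u)" "?n (Suc u) < ?n (Suc (Suc u))" "?n (Suc (Suc u)) < ?n ?i"
    unfolding pref_period_def by simp_all
  have "\<not> (?n ?i - ?n (Suc (Suc u))) dvd (?n ?i - ?n u)"
    using gaps by (intro not_dvd_between[where c = 2]) linarith+
  moreover have "\<not> (?n ?i - ?n (Suc u)) dvd (?n ?i - ?n u)"
    using gaps by (intro not_dvd_between[where c = 1]) linarith+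
  ultimately show "\<not> (?n ?i - ?n j) dvd (?n ?i - ?n (?i - \<delta> ?i))"
    using j assms(1) by auto
qed

lemma admissible_delay3_after3:
  assumes "\<delta> (Suc (Suc (Suc (Suc u)))) = 3" "\<delta> (Suc (Suc (Suc u))) = 3"
  shows "admissible \<delta> (Suc (Suc (Suc (Suc u))))"
  unfolding admissible_def
proof (intro disjI2 allI impI)
  let ?n = "pref_len \<delta>" and ?i = "Suc (Suc (Suc (Suc u)))"
  fix j assume "?i - \<delta> ?i < j \<and> j < ?i"
  then have j: "j = Suc (Suc u) \<or> j = Suc (Suc (Suc u))"
    using assms(1) by linarith
  have "\<not> fresh_step \<delta> (Suc (Suc (Suc u)))"
    using assms(2) unfolding fresh_step_def by simp
  then have "?n ?i = 2 * ?n (Suc (Suc (Suc u))) - ?n u"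
    using assms(2) by (simp add: pref_len.simps(2)[of \<delta> "Suc (Suc (Suc u))"])
  moreover have "pref_period \<delta> (Suc u) \<le> pref_period \<delta> (Suc (Suc u))"
    using mono_pref_period by (simp add: monoD)
  moreover have "?n u < ?n (Suc u)" "?n (Suc u) < ?n (Suc (Suc u))"
    "?n (Suc (Suc u)) < ?n (Suc (Suc (Suc u)))" "?n (Suc (Suc (Suc u))) < ?n ?i"
    by simp_all
  ultimately have gaps: "?n ?i = 2 * ?n (Suc (Suc (Suc u))) - ?n u"
    "?n (Suc (Suc u)) - ?n (Suc u) \<le> ?n (Suc (Suc (Suc u))) - ?n (Suc (Suc u))"
    "?n u < ?n (Suc u)" "?n (Suc u) < ?n (Suc (Suc u))"
    "?n (Suc (Suc u)) < ?n (Suc (Suc (Suc u)))" "?n (Suc (Suc (Suc u))) < ?n ?i"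
    unfolding pref_period_def by simp_all
  have "\<not> (?n ?i - ?n (Suc (Suc (Suc u)))) dvd (?n ?i - ?n (Suc u))"
    using gaps by (intro not_dvd_between[where c = 1]) linarith+
  moreover have "\<not> (?n ?i - ?n (Suc (Suc u))) dvd (?n ?i - ?n (Suc u))"
    using gaps by (intro not_dvd_between[where c = 1]) linarith+
  ultimately show "\<not> (?n ?i - ?n j) dvd (?n ?i - ?n (?i - \<delta> ?i))"
    using j assms(1) by auto
qed

section \<open>A family of delay sequences\<close>

text \<open>After two fresh steps (prefix lengths \<open>0, 1, 3\<close>) the delays repeat the block
  \<open>2\<^sup>k (1 3 2)\<^sup>m 1 3 3\<close> of length \<open>k + 3 m + 3\<close>.\<close>

definition delay_pattern :: "nat \<Rightarrow> nat \<Rightarrow> nat \<Rightarrow> nat" where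
  "delay_pattern m k r =
     (if r < k then 2
      else if r < k + 3 * m then [1, 3, 2] ! ((r - k) mod 3)
      else [1, 3, 3] ! (r - k - 3 * m))"

definition delays :: "nat \<Rightarrow> nat \<Rightarrow> nat \<Rightarrow> nat" where
  "delays m k i = (if i < 2 then 0 else delay_pattern m k ((i - 2) mod (k + 3 * m + 3)))"

locale delay_family =
  fixes m k :: nat
  assumes m_pos: "1 \<le> m" and k_ge: "10 \<le> k"
begin

abbreviation \<delta> :: "nat \<Rightarrow> nat" where "\<delta> \<equiv> delays m k"

abbreviation n :: "nat \<Rightarrow> nat" where "n \<equiv> pref_len \<delta>"

definition block_start :: "nat \<Rightarrow> nat" where
  "block_start b = 2 + b * (k + 3 * m + 3)"

definition cycles_start :: "nat \<Rightarrow> nat" where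
  "cycles_start b = block_start b + k"

definition closing_start :: "nat \<Rightarrow> nat" where
  "closing_start b = cycles_start b + 3 * m"

lemma block_start_Suc: "block_start (Suc b) = closing_start b + 3"
  unfolding block_start_def cycles_start_def closing_start_def by simp

lemma cycles_start_ge: "12 \<le> cycles_start b"
  unfolding cycles_start_def block_start_def using k_ge by simp

lemma delays_block: "r < k + 3 * m + 3 \<Longrightarrow> \<delta> (block_start b + r) = delay_pattern m k r"
  unfolding delays_def block_start_def by simp

lemma delays_run: "r < k \<Longrightarrow> \<delta> (block_start b + r) = 2"
  by (simp add: delays_block delay_pattern_def)

lemma delays_cycle_1: "t \<le> m \<Longrightarrow> \<delta> (cycles_start b + 3 * t) = 1"
  using delays_block[of "k + 3 * t" b]
  by (auto simp: cycles_start_def delay_pattern_def add.assoc)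

lemma delays_cycle_3: "t \<le> m \<Longrightarrow> \<delta> (cycles_start b + 3 * t + 1) = 3"
  using delays_block[of "k + 3 * t + 1" b]
  by (cases "t = m") (auto simp: cycles_start_def delay_pattern_def add.assoc mod_Suc)

lemma delays_cycle_2: "t < m \<Longrightarrow> \<delta> (cycles_start b + 3 * t + 2) = 2"
  using delays_block[of "k + 3 * t + 2" b]
  by (auto simp: cycles_start_def delay_pattern_def add.assoc mod_Suc)

lemma delays_closing: "\<delta> (closing_start b + 2) = 3"
  using delays_block[of "k + 3 * m + 2" b]
  by (simp add: closing_start_def cycles_start_def delay_pattern_def add.assoc)

lemma position_cases [consumes 1]:
  assumes "2 \<le> i"
  obtains (run) b r where "r < k" "i = block_start b + r"
  | (cycle_1) b t where "t \<le> m" "i = cycles_start b + 3 * t"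
  | (cycle_3) b t where "t \<le> m" "i = cycles_start b + 3 * t + 1"
  | (cycle_2) b t where "t < m" "i = cycles_start b + 3 * t + 2"
  | (closing) b where "i = closing_start b + 2"
proof -
  define b where "b = (i - 2) div (k + 3 * m + 3)"
  define r where "r = (i - 2) mod (k + 3 * m + 3)"
  have i: "i = block_start b + r"
    unfolding b_def r_def block_start_def
    using assms div_mult_mod_eq[of "i - 2" "k + 3 * m + 3"] by linarith
  have r: "r < k + 3 * m + 3"
    unfolding r_def by simp
  show thesis
  proof (cases "r < k")
    case True
    then show thesis using run i by blast
  next
    case False
    define t where "t = (r - k) div 3"
    define s where "s = (r - k) mod 3"
    have its: "i = cycles_start b + 3 * t + s" "t \<le> m"
      unfolding t_def s_def cycles_start_def using i r False by auto
    have "s < 3"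
      unfolding s_def by simp
    then consider "s = 0" | "s = 1" | "s = 2" "t < m" | "s = 2" "t = m"
      using its(2) by linarith
    then show thesis
      using its cycle_1 cycle_3 cycle_2 closing unfolding closing_start_def by cases auto
  qed
qed

lemma delays_range:
  assumes "2 \<le> i"
  shows "0 < \<delta> i \<and> \<delta> i \<le> i"
  using assms
proof (cases rule: position_cases)
  case (run b r)
  then show ?thesis using delays_run by (simp add: block_start_def)
next
  case (cycle_1 b t)
  then show ?thesis using delays_cycle_1 cycles_start_ge[of b] by simp
next
  case (cycle_3 b t)
  then show ?thesis using delays_cycle_3 cycles_start_ge[of b] by simp
next
  case (cycle_2 b t)
  then show ?thesis using delays_cycle_2 cycles_start_ge[of b] by simp
next
  case (closing b)
  then show ?thesis
    using delays_closing cycles_start_ge[of b] unfolding closing_start_def by simp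
qed

lemma fresh_step_delays_iff: "fresh_step \<delta> i \<longleftrightarrow> i < 2"
  using delays_range[of i] unfolding fresh_step_def delays_def by (cases "i < 2") auto

lemma admissible_delays_run:
  assumes "r < k"
  shows "admissible \<delta> (block_start b + r)"
proof -
  define u where "u = b * (k + 3 * m + 3) + r"
  have i: "block_start b + r = Suc (Suc u)"
    unfolding u_def block_start_def by simp
  have "fresh_step \<delta> (Suc u) \<or> 2 \<le> \<delta> (Suc u)"
  proof (cases r)
    case 0
    show ?thesis
    proof (cases b)
      case 0
      then show ?thesis
        using \<open>r = 0\<close> unfolding u_def by (simp add: fresh_step_delays_iff)
    next
      case (Suc b')
      then have "Suc u = closing_start b' + 2"
        using \<open>r = 0\<close> i block_start_Suc by simp
      then show ?thesis
        using delays_closing by simp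
    qed
  next
    case (Suc r')
    then have "Suc u = block_start b + r'" "r' < k"
      using assms i by simp_all
    then show ?thesis
      using delays_run by simp
  qed
  moreover have "\<delta> (Suc (Suc u)) = 2"
    using delays_run[OF assms, of b] i by simp
  ultimately show ?thesis
    unfolding i by (rule admissible_delay2[rotated])
qed

lemma admissible_delays_cycle_3:
  assumes "t \<le> m"
  shows "admissible \<delta> (cycles_start b + 3 * t + 1)"
proof -
  define v where "v = cycles_start b + 3 * t - 2"
  have i: "cycles_start b + 3 * t + 1 = Suc (Suc (Suc v))" "cycles_start b + 3 * t = Suc (Suc v)"
    using cycles_start_ge[of b] unfolding v_def by simp_all
  have "2 \<le> \<delta> (Suc v)"
  proof (cases t)
    case 0
    then have "Suc v = block_start b + (k - 1)"
      using k_ge unfolding v_def cycles_start_def by simp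
    then show ?thesis
      using delays_run[of "k - 1" b] k_ge by simp
  next
    case (Suc t')
    then have "Suc v = cycles_start b + 3 * t' + 2" "t' < m"
      using assms unfolding v_def by simp_all
    then show ?thesis
      using delays_cycle_2 by simp
  qed
  then show ?thesis
    using admissible_delay3_after1[of \<delta> v] delays_cycle_1[OF assms, of b] delays_cycle_3[OF assms, of b]
    unfolding i by simp
qed

lemma admissible_delays_closing: "admissible \<delta> (closing_start b + 2)"
proof -
  define v where "v = closing_start b - 2"
  have "closing_start b + 2 = Suc (Suc (Suc (Suc v)))" "cycles_start b + 3 * m + 1 = Suc (Suc (Suc v))"
    using cycles_start_ge[of b] unfolding v_def closing_start_def by simp_all
  then show ?thesis
    using admissible_delay3_after3[of \<delta> v] delays_closing[of b] delays_cycle_3[of m b] by simp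
qed

lemma admissible_delays: "admissible \<delta> i"
proof (cases "i < 2")
  case True
  then show ?thesis
    unfolding admissible_def by (simp add: fresh_step_delays_iff)
next
  case False
  then have "2 \<le> i"
    by simp
  then show ?thesis
  proof (cases rule: position_cases)
    case (cycle_1 b t)
    then show ?thesis
      using admissible_delay1 delays_cycle_1 by simp
  next
    case (cycle_2 b t)
    moreover have "cycles_start b + 3 * t + 2 = Suc (Suc (cycles_start b + 3 * t))"
      by simp
    ultimately show ?thesis
      using admissible_delay2 delays_cycle_2[of t b] delays_cycle_3[of t b] by simp
  qed (use admissible_delays_run admissible_delays_cycle_3 admissible_delays_closing in simp_all)
qed

lemma pref_len_delays_1: "n 1 = 1"
  by (simp add: pref_len.simps(2) fresh_step_delays_iff)

lemma pref_len_delays_2: "n 2 = 3"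
  by (simp add: numeral_2_eq_2 pref_len.simps(2) fresh_step_delays_iff)

lemma pref_len_delays_Suc:
  assumes "2 \<le> i"
  shows "real (n (Suc i)) = 2 * real (n i) - real (n (i - \<delta> i))"
proof -
  have "n (i - \<delta> i) \<le> 2 * n i"
    using pref_len_le_iff[of \<delta> "i - \<delta> i" i] by linarith
  then show ?thesis
    using assms by (simp add: pref_len.simps(2) fresh_step_delays_iff of_nat_diff)
qed

end

section \<open>Growth of the prefix lengths\<close>

lemma sqrt_3_mult_sqrt_3: "sqrt 3 * (sqrt 3 * x) = (3::real) * x"
  by (simp flip: mult.assoc)

lemma sqrt_3_gt: "1.732 < sqrt (3::real)"
proof -
  have "sqrt (1.732\<^sup>2) < sqrt (3::real)"
    by (rule real_sqrt_less_mono) (simp add: power2_eq_square)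
  then show ?thesis by simp
qed

lemma sqrt_3_lt: "sqrt (3::real) < 1.7321"
proof -
  have "sqrt 3 < sqrt (1.7321\<^sup>2 :: real)"
    by (rule real_sqrt_less_mono) (simp add: power2_eq_square)
  then show ?thesis by simp
qed

lemma le_sqrt_3_mult:
  fixes x y z :: real
  assumes "y = 2 * x - z" "x \<le> (2 + sqrt 3) * z"
  shows "y \<le> sqrt 3 * x"
proof -
  have "(2 - sqrt 3) * x \<le> (2 - sqrt 3) * ((2 + sqrt 3) * z)"
    using assms(2) sqrt_3_lt by (intro mult_left_mono) simp_all
  also have "\<dots> = z"
    by (simp add: algebra_simps sqrt_3_mult_sqrt_3)
  finally show ?thesis
    using assms(1) by (simp add: algebra_simps)
qed

context delay_family
begin

abbreviation N :: "nat \<Rightarrow> real" where "N i \<equiv> real (n i)"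

lemma N_run:
  "r < k \<Longrightarrow> N (block_start b + r + 1) = 2 * N (block_start b + r) - N (block_start b + r - 2)"
  using pref_len_delays_Suc[of "block_start b + r"] delays_run[of r b]
  unfolding block_start_def by simp

lemma N_cycle_1:
  "t \<le> m \<Longrightarrow>
     N (cycles_start b + 3 * t + 1) = 2 * N (cycles_start b + 3 * t) - N (cycles_start b + 3 * t - 1)"
  using pref_len_delays_Suc[of "cycles_start b + 3 * t"] delays_cycle_1[of t b] cycles_start_ge[of b]
  by simp

lemma N_cycle_3:
  "t \<le> m \<Longrightarrow>
     N (cycles_start b + 3 * t + 2) = 2 * N (cycles_start b + 3 * t + 1) - N (cycles_start b + 3 * t - 2)"
proof -
  assume "t \<le> m"
  moreover have "cycles_start b + 3 * t + 1 - 3 = cycles_start b + 3 * t - 2"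
    using cycles_start_ge[of b] by simp
  ultimately show ?thesis
    using pref_len_delays_Suc[of "cycles_start b + 3 * t + 1"] delays_cycle_3[of t b] cycles_start_ge[of b]
    by simp
qed

lemma N_cycle_2:
  "t < m \<Longrightarrow>
     N (cycles_start b + 3 * t + 3) = 2 * N (cycles_start b + 3 * t + 2) - N (cycles_start b + 3 * t)"
  using pref_len_delays_Suc[of "cycles_start b + 3 * t + 2"] delays_cycle_2[of t b] cycles_start_ge[of b]
  by (simp add: numeral_3_eq_3)

lemma N_closing: "N (closing_start b + 3) = 2 * N (closing_start b + 2) - N (closing_start b - 1)"
proof -
  have "closing_start b + 2 - 3 = closing_start b - 1"
    using cycles_start_ge[of b] unfolding closing_start_def by simp
  then show ?thesis
    using pref_len_delays_Suc[of "closing_start b + 2"] delays_closing[of b] cycles_start_ge[of b]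
    unfolding closing_start_def by (simp add: numeral_3_eq_3)
qed

text \<open>On a cycle \<open>1 3 2\<close> of delays, the map
  \<open>(N i, N (i - 1), N (i - 2)) \<mapsto> (N (i + 3), N (i + 2), N (i + 1))\<close> is linear, and \<open>conserved\<close> and \<open>deviation\<close> are its left eigenvectors for the
  eigenvalues \<open>1\<close> and \<open>2 - sqrt 3\<close>.\<close>

definition conserved :: "nat \<Rightarrow> real" where
  "conserved i = N i - N (i - 1) - N (i - 2)"

definition deviation :: "nat \<Rightarrow> real" where
  "deviation i = (1 - sqrt 3) * N i + sqrt 3 * N (i - 1) - N (i - 2)"

lemma conserved_run:
  "r < k \<Longrightarrow> conserved (block_start b + r + 1) = conserved (block_start b + r)"
  using N_run[of r b] unfolding conserved_def block_start_def
  by (simp add: algebra_simps)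

lemma conserved_cycles_start: "conserved (cycles_start b) = conserved (block_start b)"
proof -
  have "r \<le> k \<Longrightarrow> conserved (block_start b + r) = conserved (block_start b)" for r
    by (induction r) (use conserved_run in fastforce)+
  then show ?thesis
    unfolding cycles_start_def by simp
qed

lemma conserved_cycle:
  assumes "t < m"
  shows "conserved (cycles_start b + 3 * t + 3) = conserved (cycles_start b + 3 * t)"
proof -
  define c where "c = cycles_start b + 3 * t"
  have r: "N (c + 1) = 2 * N c - N (c - 1)" "N (c + 2) = 2 * N (c + 1) - N (c - 2)"
    "N (c + 3) = 2 * N (c + 2) - N c"
    using N_cycle_1[of t b] N_cycle_3[of t b] N_cycle_2[of t b] assms unfolding c_def by simp_all
  have e: "c + 3 - 1 = c + 2" "c + 3 - 2 = c + 1"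
    by simp_all
  show ?thesis
    unfolding conserved_def c_def[symmetric] e r by (simp add: algebra_simps)
qed

lemma deviation_cycle:
  assumes "t < m"
  shows "deviation (cycles_start b + 3 * t + 3) = (2 - sqrt 3) * deviation (cycles_start b + 3 * t)"
proof -
  define c where "c = cycles_start b + 3 * t"
  have r: "N (c + 1) = 2 * N c - N (c - 1)" "N (c + 2) = 2 * N (c + 1) - N (c - 2)"
    "N (c + 3) = 2 * N (c + 2) - N c"
    using N_cycle_1[of t b] N_cycle_3[of t b] N_cycle_2[of t b] assms unfolding c_def by simp_all
  have e: "c + 3 - 1 = c + 2" "c + 3 - 2 = c + 1"
    by simp_all
  show ?thesis
    unfolding deviation_def c_def[symmetric] e r by (simp add: algebra_simps sqrt_3_mult_sqrt_3)
qed

lemma conserved_deviation_cycles: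
  "t \<le> m \<Longrightarrow> conserved (cycles_start b + 3 * t) = conserved (cycles_start b) \<and>
     deviation (cycles_start b + 3 * t) = (2 - sqrt 3) ^ t * deviation (cycles_start b)"
proof (induction t)
  case (Suc t)
  have e: "cycles_start b + 3 * Suc t = cycles_start b + 3 * t + 3"
    by simp
  show ?case
    unfolding e using conserved_cycle[of t b] deviation_cycle[of t b] Suc by simp
qed simp

lemma conserved_closing:
  "conserved (closing_start b + 3) =
     conserved (closing_start b) + N (closing_start b) - N (closing_start b - 1)"
proof -
  define c where "c = closing_start b"
  have r: "N (c + 1) = 2 * N c - N (c - 1)" "N (c + 2) = 2 * N (c + 1) - N (c - 2)"
    "N (c + 3) = 2 * N (c + 2) - N (c - 1)"
    using N_cycle_1[of m b] N_cycle_3[of m b] N_closing[of b] unfolding c_def closing_start_def by simp_all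
  have e: "c + 3 - 1 = c + 2" "c + 3 - 2 = c + 1"
    by simp_all
  show ?thesis
    unfolding conserved_def c_def[symmetric] e r by (simp add: algebra_simps)
qed

lemma excess_cycle:
  assumes "t \<le> m"
  shows "N (cycles_start b + 3 * t + 2) - sqrt 3 * N (cycles_start b + 3 * t + 1) =
     (2 - sqrt 3) * ((1 + sqrt 3) * conserved (cycles_start b + 3 * t) + deviation (cycles_start b + 3 * t))"
proof -
  define c where "c = cycles_start b + 3 * t"
  have r: "N (c + 1) = 2 * N c - N (c - 1)" "N (c + 2) = 2 * N (c + 1) - N (c - 2)"
    using N_cycle_1[of t b] N_cycle_3[of t b] assms unfolding c_def by simp_all
  have e: "c - 1 - 1 = c - 2"
    by simp
  show ?thesis
    unfolding conserved_def deviation_def c_def[symmetric] e r by (simp add: algebra_simps sqrt_3_mult_sqrt_3)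
qed

lemma excess_closing:
  "N (closing_start b + 3) - sqrt 3 * N (closing_start b + 2) =
     (2 - sqrt 3) * ((1 + sqrt 3) * conserved (closing_start b) - sqrt 3 * deviation (closing_start b))"
proof -
  define c where "c = closing_start b"
  have r: "N (c + 1) = 2 * N c - N (c - 1)" "N (c + 2) = 2 * N (c + 1) - N (c - 2)"
    "N (c + 3) = 2 * N (c + 2) - N (c - 1)"
    using N_cycle_1[of m b] N_cycle_3[of m b] N_closing[of b] unfolding c_def closing_start_def by simp_all
  have e: "c - 1 - 1 = c - 2"
    by simp
  show ?thesis
    unfolding conserved_def deviation_def c_def[symmetric] e r by (simp add: algebra_simps sqrt_3_mult_sqrt_3)
qed

abbreviation gap :: "nat \<Rightarrow> real" where "gap i \<equiv> real (pref_period \<delta> i)"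

lemma gap_eq: "gap i = N (Suc i) - N i"
  unfolding pref_period_def by (simp add: of_nat_diff)

lemma gap_mono: "i \<le> j \<Longrightarrow> gap i \<le> gap j"
  using mono_pref_period by (simp add: monoD)

lemma gap_pos: "0 < gap i"
  by (simp add: pref_period_pos)

lemma gap_run:
  assumes "r < k"
  shows "gap (block_start b + r) = gap (block_start b + r - 1) + gap (block_start b + r - 2)"
proof -
  have "Suc (block_start b + r - 1) = block_start b + r" "Suc (block_start b + r - 2) = block_start b + r - 1"
    unfolding block_start_def by simp_all
  then show ?thesis
    using N_run[OF assms, of b] unfolding gap_eq by simp
qed

lemma gap_run_growth:
  "r < k \<Longrightarrow> 2 ^ ((r + 1) div 2) * gap (block_start b - 1) \<le> gap (block_start b + r)"
proof (induction r rule: less_induct)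
  case (less r)
  consider "r = 0" | "r = 1" | "2 \<le> r"
    by linarith
  then show ?case
  proof cases
    case 1
    then show ?thesis
      using gap_mono[of "block_start b - 1" "block_start b"] by simp
  next
    case 2
    then show ?thesis
      using gap_run[of 1 b] less.prems gap_mono[of "block_start b - 1" "block_start b"] by simp
  next
    case 3
    have "2 ^ ((r - 2 + 1) div 2) * gap (block_start b - 1) \<le> gap (block_start b + r - 2)"
      using less.IH[of "r - 2"] less.prems 3 by (simp add: add_diff_assoc)
    moreover have "gap (block_start b + r - 2) \<le> gap (block_start b + r - 1)"
      by (rule gap_mono) simp
    moreover have "(r + 1) div 2 = Suc ((r - 2 + 1) div 2)"
      using 3 by simp
    ultimately show ?thesis
      using gap_run[OF less.prems, of b] by simp
  qed
qed

lemma gap_cycles_start: "2 ^ (k div 2) * gap (block_start b - 1) \<le> gap (cycles_start b - 1)"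
proof -
  have "k - 1 + 1 = k" "block_start b + (k - 1) = cycles_start b - 1"
    using k_ge unfolding cycles_start_def by simp_all
  then show ?thesis
    using gap_run_growth[of "k - 1" b] k_ge by simp
qed

lemma gap_cycles_start_ratio: "3 / 2 * gap (cycles_start b - 2) \<le> gap (cycles_start b - 1)"
proof -
  have e: "block_start b + (k - 1) = cycles_start b - 1" "block_start b + (k - 2) = cycles_start b - 2"
    "cycles_start b - 1 - 1 = cycles_start b - 2" "cycles_start b - 1 - 2 = cycles_start b - 3"
    "cycles_start b - 2 - 1 = cycles_start b - 3" "cycles_start b - 2 - 2 = cycles_start b - 4"
    using k_ge unfolding cycles_start_def by simp_all
  have "gap (cycles_start b - 1) = gap (cycles_start b - 2) + gap (cycles_start b - 3)"
    using gap_run[of "k - 1" b] k_ge unfolding e by simp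
  moreover have "gap (cycles_start b - 2) = gap (cycles_start b - 3) + gap (cycles_start b - 4)"
    using gap_run[of "k - 2" b] k_ge unfolding e by simp
  moreover have "gap (cycles_start b - 4) \<le> gap (cycles_start b - 3)"
    by (rule gap_mono) simp
  ultimately show ?thesis
    by simp
qed

definition kappa :: real where
  "kappa = 2 / 2 ^ (k div 2)"

lemma kappa_pos: "0 < kappa"
  unfolding kappa_def by simp

lemma kappa_le: "kappa \<le> 1 / 16"
proof -
  have "(2::real) ^ 5 \<le> 2 ^ (k div 2)"
    using k_ge by (intro power_increasing) simp_all
  then show ?thesis
    unfolding kappa_def by (simp add: field_simps)
qed

lemma conserved_cycles_start_Suc:
  "conserved (cycles_start (Suc b)) = conserved (cycles_start b) + gap (closing_start b - 1)"
proof -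
  have "conserved (cycles_start (Suc b)) = conserved (closing_start b + 3)"
    using conserved_cycles_start[of "Suc b"] block_start_Suc by simp
  also have "\<dots> = conserved (cycles_start b) + gap (closing_start b - 1)"
    using conserved_closing[of b] conserved_deviation_cycles[of m b] gap_eq[of "closing_start b - 1"]
      cycles_start_ge[of b] unfolding closing_start_def by simp
  finally show ?thesis .
qed

text \<open>The run of \<open>k\<close> delays 2 multiplies the gaps by at least \<open>2 ^ (k div 2)\<close>,
  while the conserved quantity grows by at most one gap per block.\<close>

lemma conserved_cycles_start_bounds:
  "0 \<le> conserved (cycles_start b) \<and> conserved (cycles_start b) \<le> kappa * gap (cycles_start b - 1)"
proof (induction b)
  case 0
  have "conserved (block_start 0) = 2" "gap (block_start 0 - 1) = 2"
    using pref_len_delays_1 pref_len_delays_2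
    unfolding conserved_def gap_eq block_start_def by (simp_all add: numeral_2_eq_2)
  then have "2 ^ (k div 2) * 2 \<le> gap (cycles_start 0 - 1)"
    using gap_cycles_start[of 0] by simp
  then have "kappa * (2 ^ (k div 2) * 2) \<le> kappa * gap (cycles_start 0 - 1)"
    using kappa_pos by (intro mult_left_mono) simp_all
  moreover have "kappa * (2 ^ (k div 2) * 2) = 4"
    unfolding kappa_def by simp
  ultimately show ?case
    using conserved_cycles_start[of 0] \<open>conserved (block_start 0) = 2\<close> by simp
next
  case (Suc b)
  let ?g = "gap (closing_start b - 1)"
  have "kappa * gap (cycles_start b - 1) \<le> kappa * ?g"
    using kappa_pos gap_mono[of "cycles_start b - 1" "closing_start b - 1"]
    unfolding closing_start_def by simp
  moreover have "kappa * ?g \<le> 1 * ?g"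
    using kappa_le gap_pos[of "closing_start b - 1"] by (intro mult_right_mono) simp_all
  ultimately have "conserved (cycles_start (Suc b)) \<le> kappa * (2 ^ (k div 2) * ?g)"
    using conserved_cycles_start_Suc[of b] Suc.IH unfolding kappa_def by simp
  also have "\<dots> \<le> kappa * gap (cycles_start (Suc b) - 1)"
  proof -
    have "?g \<le> gap (block_start (Suc b) - 1)"
      using gap_mono block_start_Suc by simp
    then have "2 ^ (k div 2) * ?g \<le> 2 ^ (k div 2) * gap (block_start (Suc b) - 1)"
      by (intro mult_left_mono) simp_all
    then have "2 ^ (k div 2) * ?g \<le> gap (cycles_start (Suc b) - 1)"
      using gap_cycles_start[of "Suc b"] by linarith
    then show ?thesis
      using kappa_pos by (simp add: mult_left_mono)
  qed
  finally show ?case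
    using conserved_cycles_start_Suc[of b] Suc.IH gap_pos[of "closing_start b - 1"] by simp
qed

lemma deviation_cycles_start:
  "deviation (cycles_start b) = gap (cycles_start b - 2) - (sqrt 3 - 1) * gap (cycles_start b - 1)"
proof -
  have "Suc (cycles_start b - 1) = cycles_start b" "Suc (cycles_start b - 2) = cycles_start b - 1"
    using cycles_start_ge[of b] by simp_all
  then show ?thesis
    unfolding deviation_def gap_eq by (simp add: algebra_simps)
qed

lemma deviation_cycles_start_le:
  "deviation (cycles_start b) \<le> - (sqrt 3 - 5 / 3) * gap (cycles_start b - 1)"
  using gap_cycles_start_ratio[of b] unfolding deviation_cycles_start by (simp add: algebra_simps)

lemma deviation_cycles_start_nonpos: "deviation (cycles_start b) \<le> 0"
proof -
  have "0 \<le> (sqrt 3 - 5 / 3) * gap (cycles_start b - 1)"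
    using sqrt_3_gt gap_pos[of "cycles_start b - 1"] by simp
  then show ?thesis
    using deviation_cycles_start_le[of b] by linarith
qed

lemma deviation_cycles_start_ge:
  "- (sqrt 3 - 1) * gap (cycles_start b - 1) \<le> deviation (cycles_start b)"
  using gap_pos[of "cycles_start b - 2"] unfolding deviation_cycles_start by (simp add: algebra_simps)

lemma gap_le_N: "gap (cycles_start b - 1) \<le> N (cycles_start b)"
proof -
  have "Suc (cycles_start b - 1) = cycles_start b"
    using cycles_start_ge[of b] by simp
  then show ?thesis
    unfolding gap_eq by simp
qed

lemma N_cycles_start_le: "N (cycles_start b) \<le> 3 * gap (cycles_start b - 1)"
proof -
  have "Suc (cycles_start b - 1) = cycles_start b" "Suc (cycles_start b - 2) = cycles_start b - 1"
    using cycles_start_ge[of b] by simp_all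
  moreover have "gap (cycles_start b - 2) \<le> gap (cycles_start b - 1)"
    by (rule gap_mono) simp
  ultimately show ?thesis
    using conserved_cycles_start_bounds[of b] unfolding conserved_def gap_eq by simp
qed

lemma N_mono: "i \<le> j \<Longrightarrow> N i \<le> N j"
  by simp

lemma N_Suc_le: "2 \<le> i \<Longrightarrow> N (Suc i) \<le> 2 * N i"
  using pref_len_delays_Suc[of i] by simp

lemma N_add_le: "2 \<le> i \<Longrightarrow> N (i + j) \<le> 2 ^ j * N i"
proof (induction j)
  case (Suc j)
  have "N (i + Suc j) \<le> 2 * N (i + j)"
    using N_Suc_le[of "i + j"] Suc.prems by simp
  also have "\<dots> \<le> 2 * (2 ^ j * N i)"
    using Suc by simp
  finally show ?case by simp
qed simp

definition eps :: real where
  "eps = (sqrt 3 - 1) * (kappa + sqrt 3 * (2 - sqrt 3) ^ (m + 1))"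

definition eps_low :: real where
  "eps_low = sqrt 3 * (2 - sqrt 3) ^ (m + 1) * (sqrt 3 - 5 / 3) / (3 * 2 ^ (3 * m + 2))"

lemma kappa_le_eps: "(sqrt 3 - 1) * kappa \<le> eps"
  unfolding eps_def using sqrt_3_gt sqrt_3_lt by (intro mult_left_mono) simp_all

lemma eps_pos: "0 < eps"
  unfolding eps_def using kappa_pos sqrt_3_gt sqrt_3_lt by (intro mult_pos_pos add_pos_nonneg) simp_all

lemma eps_low_pos: "0 < eps_low"
  unfolding eps_low_def using sqrt_3_gt sqrt_3_lt by simp

lemma eps_le: "eps \<le> 19 / 100"
proof -
  have "(2 - sqrt 3) ^ (m + 1) \<le> (2 - sqrt 3) ^ 2"
    using m_pos sqrt_3_gt sqrt_3_lt by (intro power_decreasing) simp_all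
  also have "\<dots> = 7 - 4 * sqrt (3::real)"
    by (simp add: power2_eq_square algebra_simps)
  finally have "sqrt 3 * (2 - sqrt 3) ^ (m + 1) \<le> sqrt 3 * (7 - 4 * sqrt 3)"
    by (intro mult_left_mono) simp_all
  also have "\<dots> = 7 * sqrt 3 - 12"
    by (simp add: algebra_simps sqrt_3_mult_sqrt_3)
  finally have "kappa + sqrt 3 * (2 - sqrt 3) ^ (m + 1) \<le> 1 / 16 + 7 * sqrt 3 - 12"
    using kappa_le by linarith
  then have "eps \<le> (sqrt 3 - 1) * (1 / 16 + 7 * sqrt 3 - 12)"
    unfolding eps_def using sqrt_3_gt by (intro mult_left_mono) simp_all
  also have "\<dots> = 527 / 16 - 303 / 16 * sqrt 3"
    by (simp add: field_simps)
  also have "\<dots> \<le> 19 / 100"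
    using sqrt_3_gt by simp
  finally show ?thesis .
qed

lemma ratio_cycle_1:
  "t \<le> m \<Longrightarrow> N (cycles_start b + 3 * t + 1) \<le> 3 / 2 * N (cycles_start b + 3 * t)"
proof -
  assume t: "t \<le> m"
  have "Suc (cycles_start b + 3 * t - 1) = cycles_start b + 3 * t" "2 \<le> cycles_start b + 3 * t - 1"
    using cycles_start_ge[of b] by simp_all
  then have "N (cycles_start b + 3 * t) \<le> 2 * N (cycles_start b + 3 * t - 1)"
    using N_Suc_le[of "cycles_start b + 3 * t - 1"] by simp
  then show ?thesis
    using N_cycle_1[OF t, of b] by simp
qed

lemma ratio_cycle_2:
  "t < m \<Longrightarrow> N (cycles_start b + 3 * t + 3) \<le> 5 / 3 * N (cycles_start b + 3 * t + 2)"
  using ratio_cycle_1[of t b] N_cycle_3[of t b] N_cycle_2[of t b] by simp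

lemma ratio_cycle_3:
  "t \<le> m \<Longrightarrow> N (cycles_start b + 3 * t + 2) \<le> (sqrt 3 + eps) * N (cycles_start b + 3 * t + 1)"
proof -
  assume t: "t \<le> m"
  let ?g = "gap (cycles_start b - 1)" and ?Q = "conserved (cycles_start b)"
    and ?E = "deviation (cycles_start b)"
  have "conserved (cycles_start b + 3 * t) = ?Q"
    and "deviation (cycles_start b + 3 * t) = (2 - sqrt 3) ^ t * ?E"
    using conserved_deviation_cycles[OF t, of b] by simp_all
  then have "N (cycles_start b + 3 * t + 2) - sqrt 3 * N (cycles_start b + 3 * t + 1)
      = (sqrt 3 - 1) * ?Q + (2 - sqrt 3) * ((2 - sqrt 3) ^ t * ?E)"
    using excess_cycle[OF t, of b] by (simp add: algebra_simps sqrt_3_mult_sqrt_3)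
  moreover have "(2 - sqrt 3) * ((2 - sqrt 3) ^ t * ?E) \<le> 0"
    using deviation_cycles_start_nonpos[of b] sqrt_3_lt by (simp add: mult_nonneg_nonpos)
  moreover have "(sqrt 3 - 1) * ?Q \<le> (sqrt 3 - 1) * (kappa * ?g)"
    using conserved_cycles_start_bounds[of b] sqrt_3_gt by (intro mult_left_mono) simp_all
  moreover have "?g \<le> N (cycles_start b + 3 * t + 1)"
    using gap_le_N[of b] N_mono[of "cycles_start b" "cycles_start b + 3 * t + 1"] by linarith
  then have "(sqrt 3 - 1) * kappa * ?g \<le> eps * N (cycles_start b + 3 * t + 1)"
    using kappa_le_eps eps_pos gap_pos[of "cycles_start b - 1"] by (intro mult_mono) simp_all
  ultimately show ?thesis
    by (simp add: algebra_simps)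
qed

lemma excess_closing_eq:
  "N (closing_start b + 3) - sqrt 3 * N (closing_start b + 2) =
     (sqrt 3 - 1) * conserved (cycles_start b) + sqrt 3 * (2 - sqrt 3) ^ (m + 1) * - deviation (cycles_start b)"
  using excess_closing[of b] conserved_deviation_cycles[of m b]
  unfolding closing_start_def by (simp add: algebra_simps sqrt_3_mult_sqrt_3)

lemma ratio_closing_le: "N (closing_start b + 3) \<le> (sqrt 3 + eps) * N (closing_start b + 2)"
proof -
  let ?g = "gap (cycles_start b - 1)" and ?c = "sqrt 3 * (2 - sqrt 3) ^ (m + 1)"
  have "(sqrt 3 - 1) * conserved (cycles_start b) \<le> (sqrt 3 - 1) * kappa * ?g"
    using conserved_cycles_start_bounds[of b] sqrt_3_gt by (simp add: mult_left_mono)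
  moreover have "- deviation (cycles_start b) \<le> (sqrt 3 - 1) * ?g"
    using deviation_cycles_start_ge[of b] by (simp add: algebra_simps)
  then have "?c * - deviation (cycles_start b) \<le> ?c * ((sqrt 3 - 1) * ?g)"
    using sqrt_3_lt by (intro mult_left_mono) simp_all
  ultimately have "N (closing_start b + 3) - sqrt 3 * N (closing_start b + 2) \<le> eps * ?g"
    unfolding excess_closing_eq eps_def by (simp add: algebra_simps)
  also have "\<dots> \<le> eps * N (closing_start b + 2)"
  proof -
    have "N (cycles_start b) \<le> N (closing_start b + 2)"
      unfolding closing_start_def by (rule N_mono) simp
    with gap_le_N[of b] have "?g \<le> N (closing_start b + 2)"
      by (rule order_trans)
    then show ?thesis
      using eps_pos by (intro mult_left_mono) simp_all
  qed
  finally show ?thesis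
    by (simp add: algebra_simps)
qed

lemma ratio_closing_ge: "(sqrt 3 + eps_low) * N (closing_start b + 2) \<le> N (closing_start b + 3)"
proof -
  let ?g = "gap (cycles_start b - 1)" and ?c = "sqrt 3 * (2 - sqrt 3) ^ (m + 1)"
  have "0 \<le> (sqrt 3 - 1) * conserved (cycles_start b)"
    using conserved_cycles_start_bounds[of b] sqrt_3_gt by simp
  moreover have "(sqrt 3 - 5 / 3) * ?g \<le> - deviation (cycles_start b)"
    using deviation_cycles_start_le[of b] by (simp add: algebra_simps)
  then have "?c * ((sqrt 3 - 5 / 3) * ?g) \<le> ?c * - deviation (cycles_start b)"
    using sqrt_3_lt by (intro mult_left_mono) simp_all
  moreover have "N (closing_start b + 2) \<le> 2 ^ (3 * m + 2) * (3 * ?g)"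
  proof -
    have "N (cycles_start b + (3 * m + 2)) \<le> 2 ^ (3 * m + 2) * N (cycles_start b)"
      using N_add_le[of "cycles_start b" "3 * m + 2"] cycles_start_ge[of b] by linarith
    also have "\<dots> \<le> 2 ^ (3 * m + 2) * (3 * ?g)"
      using N_cycles_start_le[of b] by simp
    finally show ?thesis
      unfolding closing_start_def by (simp add: add.assoc)
  qed
  then have "eps_low * N (closing_start b + 2) \<le> eps_low * (2 ^ (3 * m + 2) * (3 * ?g))"
    using eps_low_pos by simp
  moreover have "eps_low * (2 ^ (3 * m + 2) * (3 * ?g)) = ?c * ((sqrt 3 - 5 / 3) * ?g)"
    unfolding eps_low_def by (simp add: field_simps)
  ultimately show ?thesis
    using excess_closing_eq[of b] by (simp add: algebra_simps)
qed

lemma sqrt_3_plus_eps_sq: "(sqrt 3 + eps) * (sqrt 3 + eps) \<le> 2 + sqrt 3"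
proof -
  have "(sqrt 3 + eps) * (sqrt 3 + eps) \<le> (sqrt 3 + 19 / 100) * (sqrt 3 + 19 / 100)"
    using eps_le eps_pos by (intro mult_mono) simp_all
  also have "\<dots> = 3 + 38 / 100 * sqrt 3 + 361 / 10000"
    by (simp add: algebra_simps)
  also have "\<dots> \<le> 2 + sqrt 3"
    using sqrt_3_gt by simp
  finally show ?thesis .
qed

lemma ratio_run_start: "N (block_start (Suc b) + 1) \<le> sqrt 3 * N (block_start (Suc b))"
proof -
  let ?c = "closing_start b"
  have "N (block_start (Suc b) + 1) = 2 * N (?c + 3) - N (?c + 1)"
    using N_run[of 0 "Suc b"] k_ge block_start_Suc by simp
  moreover have "N (?c + 3) \<le> (2 + sqrt 3) * N (?c + 1)"
  proof -
    have "N (?c + 3) \<le> (sqrt 3 + eps) * N (?c + 2)"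
      by (rule ratio_closing_le)
    also have "\<dots> \<le> (sqrt 3 + eps) * ((sqrt 3 + eps) * N (?c + 1))"
      using ratio_cycle_3[of m b] eps_pos sqrt_3_gt unfolding closing_start_def
      by (intro mult_left_mono) (simp_all add: add.assoc)
    also have "\<dots> \<le> (2 + sqrt 3) * N (?c + 1)"
      using sqrt_3_plus_eps_sq by (simp add: mult.assoc[symmetric] mult_right_mono)
    finally show ?thesis .
  qed
  ultimately show ?thesis
    using le_sqrt_3_mult block_start_Suc by simp
qed

lemma ratio_run_second: "N (block_start (Suc b) + 2) \<le> sqrt 3 * N (block_start (Suc b) + 1)"
proof -
  let ?c = "closing_start b"
  have "N (block_start (Suc b) + 2) = 2 * N (block_start (Suc b) + 1) - N (?c + 2)"
    using N_run[of 1 "Suc b"] k_ge block_start_Suc by simp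
  moreover have "N (block_start (Suc b) + 1) \<le> (2 + sqrt 3) * N (?c + 2)"
  proof -
    have "N (block_start (Suc b) + 1) = 2 * N (?c + 3) - N (?c + 1)"
      using N_run[of 0 "Suc b"] k_ge block_start_Suc by simp
    moreover have "N (?c + 3) \<le> (sqrt 3 + eps) * N (?c + 2)"
      by (rule ratio_closing_le)
    moreover have "N (?c + 2) \<le> 2 * N (?c + 1)"
      using N_Suc_le[of "?c + 1"] cycles_start_ge[of b] unfolding closing_start_def by simp
    ultimately have "N (block_start (Suc b) + 1) \<le> (2 * sqrt 3 + 2 * eps - 1 / 2) * N (?c + 2)"
      by (simp add: algebra_simps)
    also have "\<dots> \<le> (2 + sqrt 3) * N (?c + 2)"
      using eps_le sqrt_3_lt by (intro mult_right_mono) simp_all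
    finally show ?thesis .
  qed
  ultimately show ?thesis
    using le_sqrt_3_mult by simp
qed

lemma ratio_run_late:
  assumes "2 \<le> r" "r < k" "1 \<le> b"
  shows "N (block_start b + r + 1) \<le> 12 / 7 * N (block_start b + r)"
proof -
  let ?i = "block_start b + r"
  have "k + 3 * m + 3 \<le> b * (k + 3 * m + 3)"
    using assms(3) by simp
  then have big: "5 \<le> ?i - 2"
    using assms k_ge unfolding block_start_def by linarith
  have "N ?i = 2 * N (?i - 1) - N (?i - 3)"
    using N_run[of "r - 1" b] assms by (simp add: numeral_3_eq_3)
  moreover have "N (?i - 1) \<le> 2 * N (?i - 2)" "N (?i - 2) \<le> 2 * N (?i - 3)"
    using N_Suc_le[of "?i - 2"] N_Suc_le[of "?i - 3"] big by (simp_all add: Suc_diff_Suc numeral_2_eq_2 numeral_3_eq_3)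
  ultimately have "N ?i \<le> 7 / 2 * N (?i - 2)"
    by simp
  then show ?thesis
    using N_run[of r b] assms by simp
qed

lemma le_sqrt_3_plus_eps_mult:
  assumes "x \<le> c * N i" "c \<le> sqrt 3 + eps"
  shows "x \<le> (sqrt 3 + eps) * N i"
  using assms mult_right_mono[of c "sqrt 3 + eps" "N i"] by simp

lemma ratio_run:
  assumes "r < k" "1 \<le> b"
  shows "N (block_start b + r + 1) \<le> (sqrt 3 + eps) * N (block_start b + r)"
proof -
  obtain b' where b: "b = Suc b'"
    using assms(2) by (cases b) auto
  consider "r = 0" | "r = 1" | "2 \<le> r"
    by linarith
  then show ?thesis
  proof cases
    case 1
    then have "N (block_start b + r + 1) \<le> sqrt 3 * N (block_start b + r)"
      using ratio_run_start[of b'] b by simp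
    then show ?thesis
      by (rule le_sqrt_3_plus_eps_mult) (use eps_pos in linarith)
  next
    case 2
    then have "N (block_start b + r + 1) \<le> sqrt 3 * N (block_start b + r)"
      using ratio_run_second[of b'] b by (simp add: add.assoc)
    then show ?thesis
      by (rule le_sqrt_3_plus_eps_mult) (use eps_pos in linarith)
  next
    case 3
    show ?thesis
      using ratio_run_late[OF 3 assms]
      by (rule le_sqrt_3_plus_eps_mult) (use eps_pos sqrt_3_gt in simp)
  qed
qed

lemma ratio_le_eventually:
  assumes "block_start 1 \<le> i"
  shows "N (Suc i) \<le> (sqrt 3 + eps) * N i"
proof -
  have "2 \<le> i"
    using assms unfolding block_start_def by simp
  then show ?thesis
  proof (cases rule: position_cases)
    case (run b r)
    moreover have "1 \<le> b"
      using assms run unfolding block_start_def by (cases b) auto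
    ultimately show ?thesis
      using ratio_run[of r b] by simp
  next
    case (cycle_1 b t)
    then have "N (Suc i) \<le> 3 / 2 * N i"
      using ratio_cycle_1[of t b] by simp
    then show ?thesis
      by (rule le_sqrt_3_plus_eps_mult) (use eps_pos sqrt_3_gt in simp)
  next
    case (cycle_3 b t)
    then show ?thesis
      using ratio_cycle_3[of t b] by simp
  next
    case (cycle_2 b t)
    then have "N (Suc i) \<le> 5 / 3 * N i"
      using ratio_cycle_2[of t b] by (simp add: numeral_3_eq_3)
    then show ?thesis
      by (rule le_sqrt_3_plus_eps_mult) (use eps_pos sqrt_3_gt in simp)
  next
    case (closing b)
    then show ?thesis
      using ratio_closing_le[of b] by (simp add: numeral_3_eq_3)
  qed
qed

lemma delta_word_of_delays:
  "ereal (sqrt 3 + eps_low) \<le> delta (word_of \<delta>) \<and> delta (word_of \<delta>) \<le> ereal (sqrt 3 + eps)"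
proof -
  let ?r = "\<lambda>i. ereal (N (Suc i) / N i)"
  have "delta (word_of \<delta>) = limsup ?r"
    using delta_word_of admissible_delays by blast
  moreover have "limsup ?r \<le> ereal (sqrt 3 + eps)"
  proof (rule Limsup_bounded)
    show "\<forall>\<^sub>F i in sequentially. ?r i \<le> ereal (sqrt 3 + eps)"
      unfolding eventually_sequentially
    proof (intro exI allI impI)
      fix i assume i: "block_start 1 \<le> i"
      then have "0 < N i"
        using pref_len_pos[of i \<delta>] unfolding block_start_def by simp
      then show "?r i \<le> ereal (sqrt 3 + eps)"
        using ratio_le_eventually[OF i] by (simp add: divide_le_eq)
    qed
  qed
  moreover have "ereal (sqrt 3 + eps_low) \<le> limsup (?r \<circ> (\<lambda>b. closing_start b + 2))"
  proof (rule le_Limsup)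
    show "\<forall>\<^sub>F b in sequentially. ereal (sqrt 3 + eps_low) \<le> (?r \<circ> (\<lambda>b. closing_start b + 2)) b"
    proof (rule always_eventually, rule allI)
      fix b
      have "0 < N (closing_start b + 2)"
        using pref_len_pos[of "closing_start b + 2" \<delta>] by simp
      then show "ereal (sqrt 3 + eps_low) \<le> (?r \<circ> (\<lambda>b. closing_start b + 2)) b"
        using ratio_closing_ge[of b] by (simp add: le_divide_eq numeral_3_eq_3)
    qed
  qed simp
  moreover have "strict_mono (\<lambda>b. closing_start b + 2)"
    unfolding strict_mono_def closing_start_def cycles_start_def block_start_def by simp
  then have "limsup (?r \<circ> (\<lambda>b. closing_start b + 2)) \<le> limsup ?r"
    by (rule limsup_subseq_mono)
  ultimately show ?thesis
    by simp
qed

lemma delta_word_of_delays_in_D0: "delta (word_of \<delta>) \<in> D0"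
  unfolding D0_def using abundant_word_of[OF admissible_delays] by blast

end

section \<open>Values of \<open>\<delta>\<close> accumulating at \<open>sqrt 3\<close> from above\<close>

lemma (in delay_family) eps_le_half_power:
  assumes "k = 2 * m + 10"
  shows "eps \<le> (1 / 2) ^ m"
proof -
  have "kappa = 2 / 2 ^ (k div 2)"
    by (rule kappa_def)
  also have "\<dots> = (1 / 2) ^ m / 16"
    using assms by (simp add: power_add field_simps)
  finally have "kappa = (1 / 2) ^ m / 16" .
  moreover have "sqrt 3 * (2 - sqrt 3) ^ (m + 1) \<le> 7 / 8 * (1 / 2) ^ m"
  proof -
    have "(2 - sqrt 3) ^ (m + 1) \<le> (1 / 2) ^ (m + 1)"
      using sqrt_3_gt sqrt_3_lt by (intro power_mono) simp_all
    then have "sqrt 3 * (2 - sqrt 3) ^ (m + 1) \<le> sqrt 3 / 2 * (1 / 2) ^ m"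
      by (simp add: mult_left_mono)
    also have "\<dots> \<le> 7 / 8 * (1 / 2) ^ m"
      using sqrt_3_lt by (intro mult_right_mono) simp_all
    finally show ?thesis .
  qed
  moreover have "0 \<le> (1 / 2 :: real) ^ m"
    by simp
  ultimately have "kappa + sqrt 3 * (2 - sqrt 3) ^ (m + 1) \<le> (1 / 2) ^ m"
    by linarith
  moreover have "0 \<le> sqrt 3 - 1" "sqrt 3 - 1 \<le> (1::real)"
    using sqrt_3_gt sqrt_3_lt by simp_all
  ultimately have "eps \<le> 1 * (1 / 2) ^ m"
    unfolding eps_def using kappa_pos sqrt_3_lt by (intro mult_mono) simp_all
  then show ?thesis
    by simp
qed

lemma D0_near_sqrt_3:
  assumes "0 < e"
  shows "\<exists>x. ereal x \<in> D0 \<and> sqrt 3 < x \<and> x < sqrt 3 + e"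
proof -
  obtain j where j: "(1 / 2 :: real) ^ j < e"
    using real_arch_pow_inv[OF assms, of "1 / 2"] by auto
  interpret F: delay_family "Suc j" "2 * Suc j + 10"
    by unfold_locales simp_all
  have "F.eps \<le> (1 / 2) ^ Suc j"
    by (rule F.eps_le_half_power) simp
  also have "\<dots> \<le> (1 / 2) ^ j"
    by (intro power_decreasing) simp_all
  finally have "F.eps < e"
    using j by linarith
  obtain x where x: "delta (word_of F.\<delta>) = ereal x"
    using F.delta_word_of_delays by (cases "delta (word_of F.\<delta>)") auto
  then have "sqrt 3 + F.eps_low \<le> x" "x \<le> sqrt 3 + F.eps"
    using F.delta_word_of_delays by simp_all
  then show ?thesis
    using F.delta_word_of_delays_in_D0 F.eps_low_pos \<open>F.eps < e\<close> x by (intro exI[of _ x]) auto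
qed

lemma strict_decseq_tendsto_from_above:
  fixes a :: real
  assumes "\<And>e. 0 < e \<Longrightarrow> \<exists>x. x \<in> S \<and> a < x \<and> x < a + e"
  shows "\<exists>f. (\<forall>j. f (Suc j) < f j) \<and> (\<forall>j. f j \<in> S) \<and> f \<longlonglongrightarrow> a"
proof -
  have "\<forall>e. \<exists>x. 0 < e \<longrightarrow> x \<in> S \<and> a < x \<and> x < a + e"
    using assms by blast
  from choice[OF this] obtain g where g: "\<And>e. 0 < e \<Longrightarrow> g e \<in> S \<and> a < g e \<and> g e < a + e"
    by blast
  define f where "f = rec_nat (g 1) (\<lambda>j x. g (min (x - a) (inverse (real (Suc (Suc j))))))"
  have f_Suc: "f (Suc j) = g (min (f j - a) (inverse (real (Suc (Suc j)))))" for j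
    unfolding f_def by simp
  have f: "f j \<in> S \<and> a < f j \<and> f j < a + inverse (real (Suc j))" for j
  proof (induction j)
    case 0
    then show ?case
      using g[of 1] unfolding f_def by simp
  next
    case (Suc j)
    let ?e = "min (f j - a) (inverse (real (Suc (Suc j))))"
    have "0 < ?e"
      using Suc by simp
    then show ?case
      using g[of ?e] min.cobounded2[of "f j - a" "inverse (real (Suc (Suc j)))"]
      unfolding f_Suc by auto
  qed
  have "f (Suc j) < f j" for j
    using f[of j] g[of "min (f j - a) (inverse (real (Suc (Suc j))))"]
      min.cobounded1[of "f j - a" "inverse (real (Suc (Suc j)))"]
    unfolding f_Suc by auto
  moreover have "f \<longlonglongrightarrow> a"
    using f by (intro tendsto_sandwich[OF _ _ tendsto_const LIMSEQ_inverse_real_of_nat_add])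
      (simp_all add: less_imp_le)
  ultimately show ?thesis
    using f by blast
qed

theorem proposition7p5:
  shows "\<exists>f :: nat \<Rightarrow> real. (\<forall>k. f (Suc k) < f k) \<and> (\<forall>k. ereal (f k) \<in> D0)
           \<and> f \<longlonglongrightarrow> sqrt 3"
  using strict_decseq_tendsto_from_above[of "{x. ereal x \<in> D0}" "sqrt 3"] D0_near_sqrt_3
  by simp

end
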